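(* There is an absolute constant $C_8$ such that for all $p\in(0,0.1)$, the number of good sequences of rectangles (over all lengths $n\ge1$) is at most $$\exp\Big[\frac{C_8}{\sqrt q}(\log q^{-1})^2\Big].$$
   Context: $q=-\log(1-p)$, $A=\lceil 1/\sqrt q\rceil$, $B=\lfloor q^{-1}\log q^{-1}\rfloor$. A rectangle is $\{a,\dots,c\}\times\{b,\dots,d\}\subset\mathbb{Z}^2$ with dimensions $(c-a+1,d-b+1)$. A sequence of rectangles $R_1,\dots,R_{n+1}$ ($n\ge1$) with $\dim(R_i)=(a_i,b_i)$, $s_i=a_{i+1}-a_i$, $t_i=b_{i+1}-b_i$ is good if: (i) $(0,0)\in R_1\subseteq\dots\subseteq R_{n+1}$; (ii) $\min(a_1,b_1)\in[A,A+3]$; (iii) $a_n+b_n\le B$; (iv) $a_{n+1}+b_{n+1}>B$; (v) for $i=1,\dots,n$, $s_i\ge a_i\sqrt q$ or $t_i\ge b_i\sqrt q$; (vi) for $i=1,\dots,n$, $s_i<a_i\sqrt q+4$ and $t_i<b_i\sqrt q+4$. *)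

theory Defs
  imports Complex_Main
begin

type_synonym rect = "int \<times> int \<times> int \<times> int"

definition rect_set :: "rect \<Rightarrow> (int \<times> int) set" where
  "rect_set R = (case R of (a, b, c, d) \<Rightarrow> {a..c} \<times> {b..d})"

definition is_rect :: "rect \<Rightarrow> bool" where
  "is_rect R = (case R of (a, b, c, d) \<Rightarrow> a \<le> c \<and> b \<le> d)"

definition dimx :: "rect \<Rightarrow> int" where
  "dimx R = (case R of (a, b, c, d) \<Rightarrow> c - a + 1)"

definition dimy :: "rect \<Rightarrow> int" where
  "dimy R = (case R of (a, b, c, d) \<Rightarrow> d - b + 1)"

definition qpar :: "real \<Rightarrow> real" where
  "qpar p = - ln (1 - p)"

definition Apar :: "real \<Rightarrow> int" where
  "Apar p = \<lceil>1 / sqrt (qpar p)\<rceil>"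

definition Bpar :: "real \<Rightarrow> int" where
  "Bpar p = \<lfloor>(1 / qpar p) * ln (1 / qpar p)\<rfloor>"

text \<open>Good sequences R_1,...,R_{n+1} (n \<ge> 1), stored as a list of length n+1
  (list index i corresponds to R_{i+1}).\<close>

definition good_seq :: "real \<Rightarrow> rect list \<Rightarrow> bool" where
  "good_seq p Rs \<longleftrightarrow>
     (let n = length Rs - 1; q = qpar p; A = Apar p; B = Bpar p;
          a = (\<lambda>i. dimx (Rs ! i)); b = (\<lambda>i. dimy (Rs ! i)) in
      length Rs \<ge> 2 \<and>
      (\<forall>i < length Rs. is_rect (Rs ! i)) \<and>
      (0, 0) \<in> rect_set (Rs ! 0) \<and>
      (\<forall>i < n. rect_set (Rs ! i) \<subseteq> rect_set (Rs ! (i + 1))) \<and>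
      A \<le> min (a 0) (b 0) \<and> min (a 0) (b 0) \<le> A + 3 \<and>
      a (n - 1) + b (n - 1) \<le> B \<and>
      a n + b n > B \<and>
      (\<forall>i < n. real_of_int (a (i + 1) - a i) \<ge> real_of_int (a i) * sqrt q
             \<or> real_of_int (b (i + 1) - b i) \<ge> real_of_int (b i) * sqrt q) \<and>
      (\<forall>i < n. real_of_int (a (i + 1) - a i) < real_of_int (a i) * sqrt q + 4
             \<and> real_of_int (b (i + 1) - b i) < real_of_int (b i) * sqrt q + 4))"

definition good_seqs :: "real \<Rightarrow> rect list set" where
  "good_seqs p = {Rs. good_seq p Rs}"

end

theory Submission
  imports Defs
begin

text \<open>Every rectangle of a good sequence contains the origin and lies inside the last one,
  whose sides are at most \<open>2B + 4\<close> by (iii) and (vi); so all rectangles are drawn from a set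
  of \<open>(4B + 9)^4 = q^{-O(1)}\<close> corner tuples. By (v) the area \<open>a\<^sub>i b\<^sub>i\<close> grows by a factor
  \<open>1 + \<surd>q\<close> in every step, and by (iii) it is still at most \<open>B\<^sup>2\<close> at step \<open>n\<close>; hence
  \<open>n = O(log q\<^sup>-\<^sup>1 / \<surd>q)\<close>. Lists of length below \<open>m\<close> over an alphabet of size \<open>K\<close> number
  at most \<open>exp (m (1 + log K))\<close>, which gives the bound.\<close>

lemma is_rect_dims_pos: "is_rect R \<Longrightarrow> 1 \<le> dimx R \<and> 1 \<le> dimy R"
  by (cases R) (auto simp: is_rect_def dimx_def dimy_def)

lemma rect_set_subset_dims_le:
  assumes "is_rect R" "rect_set R \<subseteq> rect_set R'"
  shows "dimx R \<le> dimx R' \<and> dimy R \<le> dimy R'"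
proof -
  obtain a b c d where R: "R = (a, b, c, d)" by (cases R) auto
  obtain a' b' c' d' where R': "R' = (a', b', c', d')" by (cases R') auto
  have "(a, b) \<in> rect_set R" "(c, d) \<in> rect_set R"
    using assms(1) by (auto simp: R is_rect_def rect_set_def)
  then have "(a, b) \<in> rect_set R'" "(c, d) \<in> rect_set R'" using assms(2) by auto
  then show ?thesis by (auto simp: R R' rect_set_def dimx_def dimy_def)
qed

definition corner_box :: "int \<Rightarrow> rect set" where
  "corner_box D = {-D..D} \<times> {-D..D} \<times> {-D..D} \<times> {-D..D}"

lemma rect_in_corner_box:
  assumes "(0, 0) \<in> rect_set R" "dimx R \<le> D" "dimy R \<le> D"
  shows "R \<in> corner_box D"
  using assms by (cases R) (auto simp: rect_set_def dimx_def dimy_def corner_box_def)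

lemma finite_corner_box: "finite (corner_box D)"
  by (simp add: corner_box_def)

lemma corner_box_nonempty: "0 \<le> D \<Longrightarrow> corner_box D \<noteq> {}"
  by (auto simp: corner_box_def)

lemma card_corner_box: "0 \<le> D \<Longrightarrow> card (corner_box D) = nat (2 * D + 1) ^ 4"
  by (simp add: corner_box_def card_cartesian_product power4_eq_xxxx)

lemma product_growth:
  fixes a b :: "nat \<Rightarrow> real"
  assumes "0 \<le> s" "1 \<le> a 0 * b 0"
    and nonneg: "\<And>i. i \<le> n \<Longrightarrow> 0 \<le> a i \<and> 0 \<le> b i"
    and mono: "\<And>i. i < n \<Longrightarrow> a i \<le> a (Suc i) \<and> b i \<le> b (Suc i)"
    and grow: "\<And>i. i < n \<Longrightarrow> (1 + s) * a i \<le> a (Suc i) \<or> (1 + s) * b i \<le> b (Suc i)"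
  shows "(1 + s) ^ n \<le> a n * b n"
proof -
  have "(1 + s) ^ i \<le> a i * b i" if "i \<le> n" for i
    using that
  proof (induction i)
    case 0
    then show ?case using assms(2) by simp
  next
    case (Suc i)
    then have i: "i < n" and IH: "(1 + s) ^ i \<le> a i * b i" by auto
    have "(1 + s) ^ Suc i \<le> (1 + s) * (a i * b i)"
      using IH \<open>0 \<le> s\<close> by (simp add: mult_left_mono)
    also have "\<dots> \<le> a (Suc i) * b (Suc i)"
      using grow[OF i]
    proof
      assume "(1 + s) * a i \<le> a (Suc i)"
      then have "((1 + s) * a i) * b i \<le> a (Suc i) * b (Suc i)"
        using mono[OF i] nonneg[of i] nonneg[of "Suc i"] i by (intro mult_mono) auto
      then show ?thesis by (simp add: mult.assoc)
    next
      assume "(1 + s) * b i \<le> b (Suc i)"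
      then have "a i * ((1 + s) * b i) \<le> a (Suc i) * b (Suc i)"
        using mono[OF i] nonneg[of i] nonneg[of "Suc i"] i \<open>0 \<le> s\<close> by (intro mult_mono) auto
      then show ?thesis by (simp add: algebra_simps)
    qed
    finally show ?case .
  qed
  then show ?thesis by simp
qed

lemma ln_one_plus_ge_half:
  fixes s :: real
  assumes "0 \<le> s" "s \<le> 1/2"
  shows "s / 2 \<le> ln (1 + s)"
proof -
  have "s * s \<le> s * (1/2)" using assms by (intro mult_left_mono) auto
  then have "s / 2 \<le> s - s\<^sup>2" by (simp add: power2_eq_square)
  also have "\<dots> \<le> ln (1 + s)" using assms by (intro ln_one_plus_pos_lower_bound) auto
  finally show ?thesis .
qed

lemma exponent_le_of_power_le:
  fixes s y :: real
  assumes "0 \<le> s" "s \<le> 1/2" "(1 + s) ^ k \<le> y"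
  shows "real k * s \<le> 2 * ln y"
proof -
  have "real k * (s / 2) \<le> real k * ln (1 + s)"
    using ln_one_plus_ge_half[OF assms(1,2)] by (intro mult_left_mono) auto
  also have "\<dots> = ln ((1 + s) ^ k)" by (simp add: ln_realpow)
  also have "\<dots> \<le> ln y"
  proof (subst ln_le_cancel_iff)
    show "0 < (1 + s) ^ k" "0 < y" "(1 + s) ^ k \<le> y"
      using assms by (auto intro: order.strict_trans2[of _ "(1 + s) ^ k"])
  qed
  finally show ?thesis by simp
qed

lemma card_lists_length_bound_exp:
  assumes "finite A" "A \<noteq> {}" "1 \<le> m"
  shows "finite {xs. set xs \<subseteq> A \<and> real (length xs) + 1 \<le> m}"
    and "real (card {xs. set xs \<subseteq> A \<and> real (length xs) + 1 \<le> m}) \<le> exp (m * (1 + ln (card A)))"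
proof -
  define M where "M = nat \<lfloor>m\<rfloor> - 1"
  define K where "K = card A"
  have K: "1 \<le> K" using assms(1,2) K_def by (simp add: Suc_le_eq card_gt_0_iff)
  have M: "real (M + 1) \<le> m" using assms(3) M_def by linarith
  have lists_eq: "{xs. set xs \<subseteq> A \<and> real (length xs) + 1 \<le> m} = {xs. set xs \<subseteq> A \<and> length xs \<le> M}"
    using assms(3) M_def by (auto, linarith+)
  then show "finite {xs. set xs \<subseteq> A \<and> real (length xs) + 1 \<le> m}"
    using finite_lists_length_le[OF assms(1)] by simp
  have "card {xs. set xs \<subseteq> A \<and> length xs \<le> M} = (\<Sum>i\<le>M. K ^ i)"
    using card_lists_length_le[OF assms(1)] K_def by simp
  also have "\<dots> \<le> (\<Sum>i\<le>M. K ^ M)" using K by (intro sum_mono power_increasing) auto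
  also have "\<dots> = (M + 1) * K ^ M" by simp
  finally have "real (card {xs. set xs \<subseteq> A \<and> length xs \<le> M}) \<le> real ((M + 1) * K ^ M)"
    by (simp only: of_nat_le_iff)
  also have "\<dots> = real (M + 1) * real K ^ M" by (simp add: algebra_simps)
  also have "\<dots> \<le> exp (real (M + 1)) * exp (real (M + 1) * ln K)"
  proof (intro mult_mono)
    show "real (M + 1) \<le> exp (real (M + 1))" using exp_ge_add_one_self[of "real (M + 1)"] by linarith
    have "real K ^ M = exp (real M * ln K)" using K by (simp add: exp_of_nat_mult)
    also have "\<dots> \<le> exp (real (M + 1) * ln K)" using K by (intro exp_mono mult_right_mono) auto
    finally show "real K ^ M \<le> exp (real (M + 1) * ln K)" .
  qed auto
  also have "\<dots> = exp (real (M + 1) * (1 + ln K))" by (simp add: exp_add distrib_left)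
  also have "\<dots> \<le> exp (m * (1 + ln K))" using M K by (intro exp_mono mult_right_mono) auto
  finally show "real (card {xs. set xs \<subseteq> A \<and> real (length xs) + 1 \<le> m}) \<le> exp (m * (1 + ln (card A)))"
    using lists_eq K_def by simp
qed

lemma good_seqE:
  assumes "good_seq p Rs"
  obtains n where "length Rs = n + 2"
    and "\<And>i. i \<le> n + 1 \<Longrightarrow> is_rect (Rs ! i)"
    and "(0, 0) \<in> rect_set (Rs ! 0)"
    and "\<And>i. i \<le> n \<Longrightarrow> rect_set (Rs ! i) \<subseteq> rect_set (Rs ! Suc i)"
    and "dimx (Rs ! n) + dimy (Rs ! n) \<le> Bpar p"
    and "\<And>i. i \<le> n \<Longrightarrow>
      real_of_int (dimx (Rs ! i)) * sqrt (qpar p) \<le> dimx (Rs ! Suc i) - dimx (Rs ! i) \<or>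
      real_of_int (dimy (Rs ! i)) * sqrt (qpar p) \<le> dimy (Rs ! Suc i) - dimy (Rs ! i)"
    and "\<And>i. i \<le> n \<Longrightarrow>
      real_of_int (dimx (Rs ! Suc i) - dimx (Rs ! i)) < dimx (Rs ! i) * sqrt (qpar p) + 4 \<and>
      real_of_int (dimy (Rs ! Suc i) - dimy (Rs ! i)) < dimy (Rs ! i) * sqrt (qpar p) + 4"
proof -
  have "2 \<le> length Rs" using assms by (simp add: good_seq_def Let_def)
  then obtain n where n: "length Rs = n + 2" by (metis add.commute le_Suc_ex)
  show thesis using assms by (intro that[OF n]) (auto simp: good_seq_def Let_def n)
qed

lemma good_seq_area_growth:
  assumes "good_seq p Rs" "0 \<le> qpar p"
  shows "(1 + sqrt (qpar p)) ^ (length Rs - 2) \<le> (real_of_int (Bpar p))\<^sup>2"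
proof -
  obtain n where len: "length Rs = n + 2" and rect: "\<And>i. i \<le> n + 1 \<Longrightarrow> is_rect (Rs ! i)"
    and nest: "\<And>i. i \<le> n \<Longrightarrow> rect_set (Rs ! i) \<subseteq> rect_set (Rs ! Suc i)"
    and last: "dimx (Rs ! n) + dimy (Rs ! n) \<le> Bpar p"
    and grow: "\<And>i. i \<le> n \<Longrightarrow>
      real_of_int (dimx (Rs ! i)) * sqrt (qpar p) \<le> dimx (Rs ! Suc i) - dimx (Rs ! i) \<or>
      real_of_int (dimy (Rs ! i)) * sqrt (qpar p) \<le> dimy (Rs ! Suc i) - dimy (Rs ! i)"
    using good_seqE[OF assms(1)] by metis
  define a where "a i = real_of_int (dimx (Rs ! i))" for i
  define b where "b i = real_of_int (dimy (Rs ! i))" for i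
  have pos: "1 \<le> a i \<and> 1 \<le> b i" if "i \<le> n + 1" for i
    using is_rect_dims_pos[OF rect[OF that]] by (simp add: a_def b_def)
  have "(1 + sqrt (qpar p)) ^ n \<le> a n * b n"
  proof (rule product_growth)
    have "1 * 1 \<le> a 0 * b 0" using pos[of 0] by (intro mult_mono) auto
    then show "1 \<le> a 0 * b 0" by simp
    show "a i \<le> a (Suc i) \<and> b i \<le> b (Suc i)" if "i < n" for i
      using rect_set_subset_dims_le[OF rect nest] that by (simp add: a_def b_def)
    show "(1 + sqrt (qpar p)) * a i \<le> a (Suc i) \<or> (1 + sqrt (qpar p)) * b i \<le> b (Suc i)"
      if "i < n" for i
      using grow[of i] that by (auto simp: a_def b_def algebra_simps)
  qed (use assms(2) pos in \<open>auto intro: order.trans[OF zero_le_one]\<close>)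
  also have "\<dots> \<le> real_of_int (Bpar p) * real_of_int (Bpar p)"
    using last pos[of n] by (intro mult_mono) (auto simp: a_def b_def)
  finally show ?thesis by (simp add: len power2_eq_square)
qed

lemma good_seq_nested:
  assumes "good_seq p Rs" "i \<le> j" "j < length Rs"
  shows "rect_set (Rs ! i) \<subseteq> rect_set (Rs ! j)"
proof -
  obtain n where len: "length Rs = n + 2"
    and nest: "\<And>i. i \<le> n \<Longrightarrow> rect_set (Rs ! i) \<subseteq> rect_set (Rs ! Suc i)"
    using good_seqE[OF assms(1)] by metis
  show ?thesis
    by (rule lift_Suc_mono_le_ivl[where f = "\<lambda>k. rect_set (Rs ! k)" and N = "{..n}"])
      (use nest assms(2,3) in \<open>auto simp: len\<close>)
qed

lemma good_seq_last_dims_le: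
  assumes "good_seq p Rs" "0 \<le> qpar p" "qpar p \<le> 1"
  shows "dimx (Rs ! (length Rs - 1)) \<le> 2 * Bpar p + 4 \<and> dimy (Rs ! (length Rs - 1)) \<le> 2 * Bpar p + 4"
proof -
  obtain n where len: "length Rs = n + 2" and rect: "is_rect (Rs ! n)"
    and last: "dimx (Rs ! n) + dimy (Rs ! n) \<le> Bpar p"
    and step: "real_of_int (dimx (Rs ! Suc n) - dimx (Rs ! n)) < dimx (Rs ! n) * sqrt (qpar p) + 4"
              "real_of_int (dimy (Rs ! Suc n) - dimy (Rs ! n)) < dimy (Rs ! n) * sqrt (qpar p) + 4"
    using good_seqE[OF assms(1)] by (metis le_add1 order.refl)
  have "sqrt (qpar p) \<le> 1" using assms(3) by simp
  then have "real_of_int (dimx (Rs ! n)) * sqrt (qpar p) \<le> dimx (Rs ! n)"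
    "real_of_int (dimy (Rs ! n)) * sqrt (qpar p) \<le> dimy (Rs ! n)"
    using is_rect_dims_pos[OF rect] assms(2) by (auto intro: mult_left_le)
  then have "real_of_int (dimx (Rs ! Suc n)) < real_of_int (2 * dimx (Rs ! n) + 4)"
    "real_of_int (dimy (Rs ! Suc n)) < real_of_int (2 * dimy (Rs ! n) + 4)"
    using step by simp_all
  then have "dimx (Rs ! Suc n) < 2 * dimx (Rs ! n) + 4" "dimy (Rs ! Suc n) < 2 * dimy (Rs ! n) + 4"
    by (simp_all only: of_int_less_iff)
  then show ?thesis using last is_rect_dims_pos[OF rect] by (simp add: len)
qed

lemma good_seq_subset_corner_box:
  assumes "good_seq p Rs" "0 \<le> qpar p" "qpar p \<le> 1"
  shows "set Rs \<subseteq> corner_box (2 * Bpar p + 4)"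
proof
  fix R assume "R \<in> set Rs"
  then obtain j where j: "j < length Rs" "R = Rs ! j" by (auto simp: in_set_conv_nth)
  have "rect_set (Rs ! 0) \<subseteq> rect_set R" "rect_set R \<subseteq> rect_set (Rs ! (length Rs - 1))"
    using good_seq_nested[OF assms(1)] j by auto
  moreover have "(0, 0) \<in> rect_set (Rs ! 0)" "is_rect R"
    using assms(1) j by (auto simp: good_seq_def Let_def)
  ultimately show "R \<in> corner_box (2 * Bpar p + 4)"
    using rect_in_corner_box rect_set_subset_dims_le good_seq_last_dims_le[OF assms]
    by (meson order_trans subsetD)
qed

lemma qpar_bounds:
  assumes "0 < p" "p < 0.1"
  shows "0 < qpar p \<and> qpar p < 1/9"
proof -
  have "ln (1 / (1 - p)) \<le> 1 / (1 - p) - 1" using assms by (intro ln_le_minus_one) auto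
  then have "qpar p \<le> p / (1 - p)" using assms by (simp add: qpar_def ln_div field_simps)
  also have "\<dots> < 1/9" using assms by (simp add: field_simps)
  finally show ?thesis using assms by (simp add: qpar_def)
qed

lemma one_le_ln_inverse:
  fixes q :: real
  assumes "0 < q" "q \<le> 1/3"
  shows "1 \<le> ln (1 / q)"
proof -
  have "3 \<le> 1 / q" using assms by (simp add: field_simps)
  then have "exp 1 \<le> 1 / q" using exp_le by linarith
  then show ?thesis using assms by (simp add: ln_ge_iff)
qed

lemma Bpar_nonneg: "0 < qpar p \<Longrightarrow> qpar p \<le> 1 \<Longrightarrow> 0 \<le> Bpar p"
  by (simp add: Bpar_def)

lemma Bpar_le_square:
  assumes "0 < qpar p"
  shows "real_of_int (Bpar p) \<le> (1 / qpar p)\<^sup>2"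
proof -
  define X where "X = 1 / qpar p"
  have "real_of_int (Bpar p) \<le> X * ln X" by (simp add: Bpar_def X_def)
  also have "\<dots> \<le> X * X"
    using assms ln_le_minus_one[of X] by (intro mult_left_mono) (auto simp: X_def)
  finally show ?thesis by (simp add: X_def power2_eq_square)
qed

lemma good_seq_length_le:
  assumes "0 < p" "p < 0.1" "good_seq p Rs"
  shows "real (length Rs) + 1 \<le> 9 * ln (1 / qpar p) / sqrt (qpar p)"
proof -
  define q where "q = qpar p"
  define s where "s = sqrt q"
  define L where "L = ln (1 / q)"
  have q: "0 < q" "q < 1/9" using qpar_bounds[OF assms(1,2)] by (auto simp: q_def)
  have s: "0 < s" "s \<le> 1/3"
  proof -
    show "0 < s" using q by (simp add: s_def)
    have "sqrt q \<le> sqrt (1/9)" using q by simp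
    then show "s \<le> 1/3" by (simp add: s_def real_sqrt_divide)
  qed
  have L: "1 \<le> L" using one_le_ln_inverse q by (simp add: L_def)
  have len: "2 \<le> length Rs" by (rule good_seqE[OF assms(3)]) simp
  have "(1 + s) ^ (length Rs - 2) \<le> (real_of_int (Bpar p))\<^sup>2"
    using good_seq_area_growth[OF assms(3)] q by (simp add: q_def s_def)
  also have "\<dots> \<le> ((1 / q)\<^sup>2)\<^sup>2"
    using Bpar_le_square Bpar_nonneg q by (intro power_mono) (auto simp: q_def)
  finally have "real (length Rs - 2) * s \<le> 2 * ln (((1 / q)\<^sup>2)\<^sup>2)"
    using s by (intro exponent_le_of_power_le) auto
  also have "\<dots> = 8 * L" by (simp add: L_def ln_realpow)
  finally have "real (length Rs) \<le> 8 * L / s + 2" using s len by (simp add: field_simps)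
  moreover have "3 \<le> L / s" using s L by (simp add: field_simps)
  ultimately show ?thesis by (simp add: L_def s_def q_def field_simps)
qed

lemma ln_card_corner_box_le:
  assumes "0 < p" "p < 0.1"
  shows "1 + ln (card (corner_box (2 * Bpar p + 4))) \<le> 17 * ln (1 / qpar p)"
proof -
  define X where "X = 1 / qpar p"
  have q: "0 < qpar p" "qpar p < 1/9" using qpar_bounds[OF assms] by auto
  have X: "9 \<le> X" using q by (simp add: X_def field_simps)
  have B: "0 \<le> Bpar p" "real_of_int (Bpar p) \<le> X\<^sup>2"
    using Bpar_nonneg Bpar_le_square q by (auto simp: X_def)
  have "81 \<le> X\<^sup>2" using X power_mono[of 9 X 2] by simp
  then have "5 * X\<^sup>2 \<le> X\<^sup>2 * X\<^sup>2" by (intro mult_right_mono) auto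
  then have side: "4 * real_of_int (Bpar p) + 9 \<le> X ^ 4"
    using B \<open>81 \<le> X\<^sup>2\<close> by (simp add: power2_eq_square power4_eq_xxxx)
  have "real (card (corner_box (2 * Bpar p + 4))) = (4 * real_of_int (Bpar p) + 9) ^ 4"
    using B by (simp add: card_corner_box ac_simps)
  then have "ln (card (corner_box (2 * Bpar p + 4))) = 4 * ln (4 * real_of_int (Bpar p) + 9)"
    by (simp add: ln_realpow)
  also have "\<dots> \<le> 4 * ln (X ^ 4)" using side B by (simp add: ln_mono)
  also have "\<dots> = 16 * ln X" by (simp add: ln_realpow)
  finally show ?thesis using one_le_ln_inverse[of "qpar p"] q by (simp add: X_def)
qed

lemma good_seqs_subset_lists:
  assumes "0 < p" "p < 0.1"
  shows "good_seqs p \<subseteq> {xs. set xs \<subseteq> corner_box (2 * Bpar p + 4)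
                          \<and> real (length xs) + 1 \<le> 9 * ln (1 / qpar p) / sqrt (qpar p)}"
proof
  fix Rs assume "Rs \<in> good_seqs p"
  then have "good_seq p Rs" by (simp add: good_seqs_def)
  then show "Rs \<in> {xs. set xs \<subseteq> corner_box (2 * Bpar p + 4)
                       \<and> real (length xs) + 1 \<le> 9 * ln (1 / qpar p) / sqrt (qpar p)}"
    using good_seq_subset_corner_box[of p Rs] good_seq_length_le[OF assms] qpar_bounds[OF assms]
    by simp
qed

theorem lemma14:
  shows "\<exists>C8::real. \<forall>p::real. 0 < p \<and> p < 0.1 \<longrightarrow>
           finite (good_seqs p) \<and>
           real (card (good_seqs p)) \<le> exp (C8 / sqrt (qpar p) * (ln (1 / qpar p))^2)"
proof (intro exI[of _ 153] allI impI conjI)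
  fix p :: real assume p: "0 < p \<and> p < 0.1"
  define L where "L = ln (1 / qpar p)"
  define m where "m = 9 * L / sqrt (qpar p)"
  define A where "A = corner_box (2 * Bpar p + 4)"
  have q: "0 < qpar p" "qpar p < 1/9" using qpar_bounds p by auto
  have "1 \<le> L" "sqrt (qpar p) \<le> 1" using one_le_ln_inverse q by (simp_all add: L_def)
  then have "sqrt (qpar p) \<le> 9 * L" by linarith
  then have m: "1 \<le> m" using q by (simp add: m_def field_simps)
  have A: "finite A" "A \<noteq> {}"
    using finite_corner_box corner_box_nonempty Bpar_nonneg q by (auto simp: A_def)
  have sub: "good_seqs p \<subseteq> {xs. set xs \<subseteq> A \<and> real (length xs) + 1 \<le> m}"
    using good_seqs_subset_lists p by (simp add: A_def m_def L_def)
  then show "finite (good_seqs p)"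
    using card_lists_length_bound_exp(1)[OF A m] finite_subset by blast
  have "real (card (good_seqs p)) \<le> real (card {xs. set xs \<subseteq> A \<and> real (length xs) + 1 \<le> m})"
    using card_mono[OF card_lists_length_bound_exp(1)[OF A m] sub] by simp
  also have "\<dots> \<le> exp (m * (1 + ln (card A)))" by (rule card_lists_length_bound_exp(2)[OF A m])
  also have "\<dots> \<le> exp (m * (17 * L))"
    using ln_card_corner_box_le p m by (simp add: A_def L_def)
  also have "\<dots> = exp (153 / sqrt (qpar p) * L\<^sup>2)" by (simp add: m_def power2_eq_square)
  finally show "real (card (good_seqs p)) \<le> exp (153 / sqrt (qpar p) * (ln (1 / qpar p))\<^sup>2)"
    by (simp add: L_def)
qed

end
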